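(* Let $A, B$ be groups, $H\le A$, $K\le B$ subgroups, and $\phi: H\to K$ an isomorphism. The following are equivalent: (i) there exist an $H$-filtration of $A$ and a $K$-filtration of $B$ which are $(H, K, \phi)$-compatible; (ii) for any $a_1, \ldots, a_n\in A\setminus H$, $b_1, \ldots, b_m\in B\setminus K$, $h_1, \ldots, h_l\in H$ and $k_1, \ldots, k_s\in K$ there exist surjective homomorphisms $f^A: A \to G^A$, $f^B: B \to G^B$ onto finite groups such that $f^A(h) \mapsto f^B(\phi(h))$ ($h\in H$) is a well-defined isomorphism $f^A(H)\to f^B(K)$, and 1) $f^A(a_i)\notin f^A(H)$ for all $i=1, \ldots, n$; 2) $f^B(b_i)\notin f^B(K)$ for all $i=1, \ldots, m$; 3) $f^A(h_i)\neq f^A(h_j)$ whenever $h_i\ne h_j$, $1\le i,j\le l$; 4) $f^B(k_i)\neq f^B(k_j)$ whenever $k_i\ne k_j$, $1\le i,j\le s$.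
   Context: A filtration of a group $A$ is a family $\{A_\lambda\}_{\lambda\in\Lambda}$ of normal finite-index subgroups with $\bigcap A_\lambda=\{e\}$; it is an $H$-filtration if $\bigcap_\lambda HA_\lambda=H$. An $H$-filtration $\{A_\lambda\}$ of $A$ and a $K$-filtration $\{B_\lambda\}$ of $B$ with the same index set are $(H,K,\phi)$-compatible if for each $\lambda$ the map $hA_\lambda\mapsto\phi(h)B_\lambda$ is well defined and an isomorphism $HA_\lambda/A_\lambda\to KB_\lambda/B_\lambda$. *)

theory Defs
  imports "HOL-Algebra.Algebra"
begin

text \<open>Intersection of a family of subsets of the carrier, relativised to the carrier
  (so that the empty family has intersection the whole group).\<close>
definition fam_Inter :: "('a, 'c) monoid_scheme \<Rightarrow> 'i set \<Rightarrow> ('i \<Rightarrow> 'a set) \<Rightarrow> 'a set" where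
  "fam_Inter G \<Lambda> F = {x \<in> carrier G. \<forall>l\<in>\<Lambda>. x \<in> F l}"

definition filtration :: "('a, 'c) monoid_scheme \<Rightarrow> 'i set \<Rightarrow> ('i \<Rightarrow> 'a set) \<Rightarrow> bool" where
  "filtration G \<Lambda> F \<longleftrightarrow>
     (\<forall>l\<in>\<Lambda>. F l \<lhd> G \<and> finite (rcosets\<^bsub>G\<^esub> (F l)))
     \<and> fam_Inter G \<Lambda> F = {\<one>\<^bsub>G\<^esub>}"

definition H_filtration :: "('a, 'c) monoid_scheme \<Rightarrow> 'a set \<Rightarrow> 'i set \<Rightarrow> ('i \<Rightarrow> 'a set) \<Rightarrow> bool" where
  "H_filtration G H \<Lambda> F \<longleftrightarrow>
     filtration G \<Lambda> F \<and> fam_Inter G \<Lambda> (\<lambda>l. H <#>\<^bsub>G\<^esub> F l) = H"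

definition compatible ::
  "('a, 'c) monoid_scheme \<Rightarrow> ('b, 'd) monoid_scheme \<Rightarrow> 'a set \<Rightarrow> 'b set \<Rightarrow> ('a \<Rightarrow> 'b)
   \<Rightarrow> 'i set \<Rightarrow> ('i \<Rightarrow> 'a set) \<Rightarrow> ('i \<Rightarrow> 'b set) \<Rightarrow> bool" where
  "compatible A B H K \<phi> \<Lambda> FA FB \<longleftrightarrow>
     (\<forall>l\<in>\<Lambda>. \<exists>\<psi>.
        \<psi> \<in> iso ((A\<lparr>carrier := H <#>\<^bsub>A\<^esub> FA l\<rparr>) Mod (FA l))
               ((B\<lparr>carrier := K <#>\<^bsub>B\<^esub> FB l\<rparr>) Mod (FB l))
        \<and> (\<forall>h\<in>H. \<psi> (FA l #>\<^bsub>A\<^esub> h) = FB l #>\<^bsub>B\<^esub> \<phi> h))"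

end

theory Submission
  imports Defs "HOL-Library.Product_Order"
begin

text \<open>
  Everything is governed by the pairs \<open>(N, M)\<close> of finite-index normal subgroups
  \<open>N \<lhd> A\<close>, \<open>M \<lhd> B\<close> with \<open>\<phi>(H \<inter> N) = K \<inter> M\<close>. Two homomorphisms defined on \<open>H\<close> have
  images that are isomorphic compatibly with the two maps iff they have the same kernel. For
  \<open>h \<mapsto> hN\<close> and \<open>h \<mapsto> \<phi>(h)M\<close> this shows that the members of \<open>(H, K, \<phi>)\<close>-compatible
  filtrations are exactly such pairs, and for \<open>f\<^sup>A\<close> and \<open>f\<^sup>B \<circ> \<phi>\<close> that the kernels of the
  maps in (ii) are exactly such pairs. Hence (i) says that every element of \<open>A\<close> outside \<open>H\<close>,
  resp. every nontrivial element, lies outside \<open>HN\<close>, resp. \<open>N\<close>, for some pair (and likewise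
  for \<open>B\<close>), while (ii) asks for a single pair doing this for finitely many elements at once.
  The two agree because the pairs are closed under componentwise intersection.
\<close>

section \<open>Kernels and quotient maps\<close>

lemma (in group_hom) hom_eq_iff_kernel:
  assumes "x \<in> carrier G" "y \<in> carrier G"
  shows "h x = h y \<longleftrightarrow> x \<otimes> inv y \<in> kernel G H h"
  using assms by (simp add: kernel_def H.inv_solve_right')

lemma (in group_hom) hom_in_image_iff:
  assumes "subgroup S G" "x \<in> carrier G"
  shows "h x \<in> h ` S \<longleftrightarrow> x \<in> S <#> kernel G H h"
proof
  assume "h x \<in> h ` S"
  then obtain s where s: "s \<in> S" "h s = h x" by (auto simp: image_iff)
  have s_carrier: "s \<in> carrier G" using subgroup.mem_carrier[OF assms(1) s(1)] .
  have "inv s \<otimes> x \<in> kernel G H h"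
    using s s_carrier assms(2) by (simp add: kernel_def)
  moreover have "x = s \<otimes> (inv s \<otimes> x)"
    using s_carrier assms(2) by (simp add: G.m_assoc [symmetric])
  ultimately show "x \<in> S <#> kernel G H h"
    using s(1) unfolding set_mult_def by blast
next
  assume "x \<in> S <#> kernel G H h"
  then obtain s k where "s \<in> S" "k \<in> kernel G H h" "x = s \<otimes> k"
    unfolding set_mult_def by blast
  then show "h x \<in> h ` S"
    using subgroup.mem_carrier[OF assms(1)] by (auto simp: kernel_def)
qed

lemma (in group_hom) finite_rcosets_kernel:
  assumes "h ` carrier G = carrier H" "finite (carrier H)"
  shows "finite (rcosets (kernel G H h))"
proof -
  have "bij_betw (\<lambda>C. the_elem (h ` C)) (carrier (G Mod (kernel G H h))) (carrier H)"
    using FactGroup_iso_set[OF assms(1)] by (simp add: iso_def)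
  then show ?thesis
    using assms(2) bij_betw_finite by (fastforce simp: FactGroup_def)
qed

lemma (in group) subset_set_mult_subgroup:
  assumes "S \<subseteq> carrier G" "subgroup N G"
  shows "S \<subseteq> S <#> N"
proof
  fix s assume "s \<in> S"
  moreover have "s = s \<otimes> \<one>" using assms(1) \<open>s \<in> S\<close> by auto
  ultimately show "s \<in> S <#> N"
    unfolding set_mult_def using subgroup.one_closed[OF assms(2)] by blast
qed

lemma (in group) r_coset_Int:
  assumes "subgroup N G" "subgroup N' G" "x \<in> carrier G"
  shows "(N \<inter> N') #> x = (N #> x) \<inter> (N' #> x)"
proof (intro equalityI subsetI)
  fix y assume "y \<in> (N #> x) \<inter> (N' #> x)"
  then obtain n n' where "n \<in> N" "n' \<in> N'" "y = n \<otimes> x" "y = n' \<otimes> x"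
    unfolding r_coset_def by blast
  moreover have "n = n'"
    using calculation assms subgroup.mem_carrier r_cancel by metis
  ultimately show "y \<in> (N \<inter> N') #> x"
    unfolding r_coset_def by blast
qed (auto simp: r_coset_def)

lemma (in group) finite_rcosets_Int:
  assumes "subgroup N G" "subgroup N' G" "finite (rcosets N)" "finite (rcosets N')"
  shows "finite (rcosets (N \<inter> N'))"
proof (rule finite_subset)
  show "rcosets (N \<inter> N') \<subseteq> (\<lambda>(C, D). C \<inter> D) ` ((rcosets N) \<times> (rcosets N'))"
    using r_coset_Int[OF assms(1,2)] by (auto simp: RCOSETS_def image_iff)
  show "finite ((\<lambda>(C, D). C \<inter> D) ` ((rcosets N) \<times> (rcosets N')))"
    using assms(3,4) by simp
qed

lemma (in group) normal_carrier: "carrier G \<lhd> G"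
  by (rule normal_invI[OF subgroup_self]) simp

lemma (in group) finite_rcosets_carrier: "finite (rcosets (carrier G))"
proof (rule finite_subset)
  show "rcosets (carrier G) \<subseteq> {carrier G}"
    by (auto simp: RCOSETS_def coset_join2[OF _ subgroup_self])
qed simp

lemma (in normal) r_coset_group_hom_Mod: "group_hom G (G Mod H) (\<lambda>a. H #> a)"
  by (intro group_hom.intro group_hom_axioms.intro is_group factorgroup_is_group r_coset_hom_Mod)

lemma (in normal) kernel_r_coset_Mod: "kernel G (G Mod H) (\<lambda>a. H #> a) = H"
  by (auto simp: kernel_def rcos_const is_group dest: rcos_self[OF _ subgroup_axioms])

lemma (in normal) FactGroup_set_mult_eq:
  assumes "subgroup S G"
  shows "G\<lparr>carrier := S <#> H\<rparr> Mod H = (G Mod H)\<lparr>carrier := (\<lambda>s. H #> s) ` S\<rparr>"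
proof -
  have coset_in_image: "H #> x \<in> (\<lambda>s. H #> s) ` S \<longleftrightarrow> x \<in> S <#> H" if "x \<in> carrier G" for x
    using group_hom.hom_in_image_iff[OF r_coset_group_hom_Mod assms that]
    by (simp add: kernel_r_coset_Mod)
  have "S <#> H \<subseteq> carrier G"
    using setmult_subset_G[OF subgroup.subset[OF assms] subset] .
  then have "(\<lambda>a. H #> a) ` (S <#> H) = (\<lambda>s. H #> s) ` S"
    using coset_in_image subgroup.subset[OF assms] by auto
  moreover have "rcosets\<^bsub>G\<lparr>carrier := S <#> H\<rparr>\<^esub> H = (\<lambda>a. H #> a) ` (S <#> H)"
    by (auto simp: RCOSETS_def)
  moreover have "set_mult (G\<lparr>carrier := S <#> H\<rparr>) = set_mult G"
    by (intro ext) simp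
  ultimately show ?thesis
    by (simp add: FactGroup_def)
qed

section \<open>Isomorphisms induced on the images of the subgroups\<close>

lemma kernel_eq_if_injective_on_image:
  assumes f: "group_hom G G1 f" and g: "group_hom G G2 g"
    and inj: "inj_on \<psi> (f ` carrier G)" and \<psi>: "\<forall>x\<in>carrier G. \<psi> (f x) = g x"
  shows "kernel G G1 f = kernel G G2 g"
proof -
  interpret G: group G
    using group_hom.axioms(1)[OF f] .
  have "f x = \<one>\<^bsub>G1\<^esub> \<longleftrightarrow> g x = \<one>\<^bsub>G2\<^esub>" if "x \<in> carrier G" for x
  proof -
    have "f x = f \<one>\<^bsub>G\<^esub> \<longleftrightarrow> \<psi> (f x) = \<psi> (f \<one>\<^bsub>G\<^esub>)"
      using that by (intro inj_on_eq_iff[OF inj, symmetric] imageI) simp_all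
    also have "\<dots> \<longleftrightarrow> g x = g \<one>\<^bsub>G\<^esub>"
      using \<psi> that by simp
    finally show ?thesis
      by (simp add: group_hom.hom_one[OF f] group_hom.hom_one[OF g])
  qed
  then show ?thesis
    by (auto simp: kernel_def)
qed

lemma iso_of_images_if_kernel_eq:
  assumes f: "group_hom G G1 f" and g: "group_hom G G2 g"
    and ker: "kernel G G1 f = kernel G G2 g"
  shows "\<exists>\<psi>. \<psi> \<in> iso (G1\<lparr>carrier := f ` carrier G\<rparr>) (G2\<lparr>carrier := g ` carrier G\<rparr>)
              \<and> (\<forall>x\<in>carrier G. \<psi> (f x) = g x)"
proof -
  interpret G: group G
    using group_hom.axioms(1)[OF f] .
  have fibres: "f x = f y \<longleftrightarrow> g x = g y" if "x \<in> carrier G" "y \<in> carrier G" for x y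
    using group_hom.hom_eq_iff_kernel[OF f that] group_hom.hom_eq_iff_kernel[OF g that] ker
    by simp
  define \<psi> where "\<psi> = (\<lambda>z. g (inv_into (carrier G) f z))"
  have \<psi>: "\<psi> (f x) = g x" if "x \<in> carrier G" for x
  proof -
    have "inv_into (carrier G) f (f x) \<in> carrier G" "f (inv_into (carrier G) f (f x)) = f x"
      using that by (simp_all add: inv_into_into f_inv_into_f)
    then show ?thesis
      unfolding \<psi>_def using fibres that by simp
  qed
  have "\<psi> \<in> hom (G1\<lparr>carrier := f ` carrier G\<rparr>) (G2\<lparr>carrier := g ` carrier G\<rparr>)"
  proof (rule homI)
    fix u v
    assume "u \<in> carrier (G1\<lparr>carrier := f ` carrier G\<rparr>)" "v \<in> carrier (G1\<lparr>carrier := f ` carrier G\<rparr>)"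
    then obtain x y where xy: "x \<in> carrier G" "y \<in> carrier G" and "u = f x" "v = f y"
      by auto
    then have "u \<otimes>\<^bsub>G1\<^esub> v = f (x \<otimes>\<^bsub>G\<^esub> y)"
      by (simp add: group_hom.hom_mult[OF f])
    then show "\<psi> (u \<otimes>\<^bsub>G1\<lparr>carrier := f ` carrier G\<rparr>\<^esub> v) = \<psi> u \<otimes>\<^bsub>G2\<lparr>carrier := g ` carrier G\<rparr>\<^esub> \<psi> v"
      using xy \<open>u = f x\<close> \<open>v = f y\<close> by (simp add: \<psi> group_hom.hom_mult[OF g])
  qed (auto simp: \<psi>)
  moreover have "bij_betw \<psi> (f ` carrier G) (g ` carrier G)"
    by (rule bij_betw_imageI) (auto simp: inj_on_def \<psi> fibres image_image)
  ultimately show ?thesis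
    using \<psi> by (auto simp: iso_def)
qed

lemma iso_of_images_iff_kernel_eq:
  assumes "group_hom G G1 f" "group_hom G G2 g"
  shows "(\<exists>\<psi>. \<psi> \<in> iso (G1\<lparr>carrier := f ` carrier G\<rparr>) (G2\<lparr>carrier := g ` carrier G\<rparr>)
              \<and> (\<forall>x\<in>carrier G. \<psi> (f x) = g x))
         \<longleftrightarrow> kernel G G1 f = kernel G G2 g"
  using kernel_eq_if_injective_on_image[OF assms] iso_of_images_if_kernel_eq[OF assms]
  by (auto simp: iso_def bij_betw_def)

lemma induced_iso_iff_kernels_correspond:
  assumes fA: "group_hom A GA fA" and fB: "group_hom B GB fB"
    and H: "subgroup H A" and K: "subgroup K B"
    and \<phi>: "\<phi> \<in> iso (A\<lparr>carrier := H\<rparr>) (B\<lparr>carrier := K\<rparr>)"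
  shows "(\<exists>\<psi>. \<psi> \<in> iso (GA\<lparr>carrier := fA ` H\<rparr>) (GB\<lparr>carrier := fB ` K\<rparr>)
              \<and> (\<forall>h\<in>H. \<psi> (fA h) = fB (\<phi> h)))
         \<longleftrightarrow> (\<forall>h\<in>H. h \<in> kernel A GA fA \<longleftrightarrow> \<phi> h \<in> kernel B GB fB)"
proof -
  let ?H = "A\<lparr>carrier := H\<rparr>"
  have fA_H: "group_hom ?H GA fA"
    using group_hom.induced_group_hom'[OF fA H] .
  have \<phi>_image: "\<phi> ` H = K"
    using \<phi> by (simp add: iso_def bij_betw_def)
  have "fB \<circ> \<phi> \<in> hom ?H GB"
    using hom_compose[of \<phi> ?H "B\<lparr>carrier := K\<rparr>" fB GB] \<phi> group_hom.induced_group_hom'[OF fB K]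
    by (simp add: iso_def group_hom_def group_hom_axioms_def)
  then have fB\<phi>: "group_hom ?H GB (fB \<circ> \<phi>)"
    using fA_H fB by (simp add: group_hom_def group_hom_axioms_def)
  have "(\<lambda>h. fB (\<phi> h)) ` H = fB ` K"
    unfolding \<phi>_image [symmetric] image_image ..
  moreover have "kernel ?H GA fA = kernel A GA fA \<inter> H"
    using subgroup.subset[OF H] by (auto simp: kernel_def)
  moreover have "kernel ?H GB (fB \<circ> \<phi>) = {h \<in> H. \<phi> h \<in> kernel B GB fB}"
    using \<phi>_image subgroup.subset[OF K] by (auto simp: kernel_def)
  ultimately have "(\<exists>\<psi>. \<psi> \<in> iso (GA\<lparr>carrier := fA ` H\<rparr>) (GB\<lparr>carrier := fB ` K\<rparr>)
              \<and> (\<forall>h\<in>H. \<psi> (fA h) = fB (\<phi> h)))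
         \<longleftrightarrow> kernel A GA fA \<inter> H = {h \<in> H. \<phi> h \<in> kernel B GB fB}"
    using iso_of_images_iff_kernel_eq[OF fA_H fB\<phi>] by simp
  then show ?thesis
    by blast
qed

lemma quotient_iso_iff_subgroups_correspond:
  assumes "group A" "group B" "subgroup H A" "subgroup K B"
    and "\<phi> \<in> iso (A\<lparr>carrier := H\<rparr>) (B\<lparr>carrier := K\<rparr>)"
    and N: "N \<lhd> A" and M: "M \<lhd> B"
  shows "(\<exists>\<psi>. \<psi> \<in> iso (A\<lparr>carrier := H <#>\<^bsub>A\<^esub> N\<rparr> Mod N) (B\<lparr>carrier := K <#>\<^bsub>B\<^esub> M\<rparr> Mod M)
              \<and> (\<forall>h\<in>H. \<psi> (N #>\<^bsub>A\<^esub> h) = M #>\<^bsub>B\<^esub> \<phi> h))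
         \<longleftrightarrow> (\<forall>h\<in>H. h \<in> N \<longleftrightarrow> \<phi> h \<in> M)"
  using induced_iso_iff_kernels_correspond[OF normal.r_coset_group_hom_Mod[OF N]
      normal.r_coset_group_hom_Mod[OF M] assms(3-5)]
  by (simp add: normal.FactGroup_set_mult_eq[OF N assms(3)] normal.FactGroup_set_mult_eq[OF M assms(4)]
      normal.kernel_r_coset_Mod[OF N] normal.kernel_r_coset_Mod[OF M])

lemma compatible_iff_subgroups_correspond:
  assumes "group A" "group B" "subgroup H A" "subgroup K B"
    and "\<phi> \<in> iso (A\<lparr>carrier := H\<rparr>) (B\<lparr>carrier := K\<rparr>)"
    and "\<forall>l\<in>\<Lambda>. FA l \<lhd> A \<and> FB l \<lhd> B"
  shows "compatible A B H K \<phi> \<Lambda> FA FB \<longleftrightarrow> (\<forall>l\<in>\<Lambda>. \<forall>h\<in>H. h \<in> FA l \<longleftrightarrow> \<phi> h \<in> FB l)"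
  using assms(6) quotient_iso_iff_subgroups_correspond[OF assms(1-5)]
  by (simp add: compatible_def)

section \<open>Compatible filtrations as separating families\<close>

definition H_separating :: "('a, 'c) monoid_scheme \<Rightarrow> 'a set \<Rightarrow> 'a set set \<Rightarrow> bool" where
  "H_separating G H \<N> \<longleftrightarrow>
     (\<forall>x\<in>carrier G - {\<one>\<^bsub>G\<^esub>}. \<exists>N\<in>\<N>. x \<notin> N) \<and> (\<forall>x\<in>carrier G - H. \<exists>N\<in>\<N>. x \<notin> H <#>\<^bsub>G\<^esub> N)"

lemma H_separating_mono: "H_separating G H \<N> \<Longrightarrow> \<N> \<subseteq> \<N>' \<Longrightarrow> H_separating G H \<N>'"
  unfolding H_separating_def by blast

lemma H_filtration_iff_H_separating:
  assumes "group G" "subgroup H G"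
  shows "H_filtration G H \<Lambda> F \<longleftrightarrow>
    (\<forall>l\<in>\<Lambda>. F l \<lhd> G \<and> finite (rcosets\<^bsub>G\<^esub> (F l))) \<and> H_separating G H (F ` \<Lambda>)"
proof (cases "\<forall>l\<in>\<Lambda>. F l \<lhd> G")
  case True
  interpret G: group G by fact
  have subgroups: "subgroup (F l) G" if "l \<in> \<Lambda>" for l
    using True that normal_imp_subgroup by auto
  have "fam_Inter G \<Lambda> F = {\<one>\<^bsub>G\<^esub>} \<longleftrightarrow> (\<forall>x\<in>carrier G - {\<one>\<^bsub>G\<^esub>}. \<exists>l\<in>\<Lambda>. x \<notin> F l)"
    using subgroup.one_closed[OF subgroups] unfolding fam_Inter_def by auto
  moreover have "fam_Inter G \<Lambda> (\<lambda>l. H <#>\<^bsub>G\<^esub> F l) = H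
      \<longleftrightarrow> (\<forall>x\<in>carrier G - H. \<exists>l\<in>\<Lambda>. x \<notin> H <#>\<^bsub>G\<^esub> F l)"
    using G.subset_set_mult_subgroup[OF subgroup.subset[OF assms(2)] subgroups]
      subgroup.subset[OF assms(2)] unfolding fam_Inter_def by auto
  ultimately show ?thesis
    unfolding H_filtration_def filtration_def H_separating_def by auto
next
  case False
  then show ?thesis
    by (auto simp: H_filtration_def filtration_def)
qed

definition compatible_pairs ::
  "('a, 'c) monoid_scheme \<Rightarrow> ('b, 'd) monoid_scheme \<Rightarrow> 'a set \<Rightarrow> ('a \<Rightarrow> 'b) \<Rightarrow> ('a set \<times> 'b set) set"
  where
  "compatible_pairs A B H \<phi> =
     {(N, M). N \<lhd> A \<and> finite (rcosets\<^bsub>A\<^esub> N) \<and> M \<lhd> B \<and> finite (rcosets\<^bsub>B\<^esub> M)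
              \<and> (\<forall>h\<in>H. h \<in> N \<longleftrightarrow> \<phi> h \<in> M)}"

lemma compatible_filtrations_iff_H_separating:
  fixes A :: "('a, 'c) monoid_scheme" and B :: "('b, 'd) monoid_scheme"
  assumes "group A" "group B" "subgroup H A" "subgroup K B"
    and "\<phi> \<in> iso (A\<lparr>carrier := H\<rparr>) (B\<lparr>carrier := K\<rparr>)"
  shows "(\<exists>(\<Lambda> :: ('a set \<times> 'b set) set) FA FB.
            H_filtration A H \<Lambda> FA \<and> H_filtration B K \<Lambda> FB \<and> compatible A B H K \<phi> \<Lambda> FA FB)
    \<longleftrightarrow> H_separating A H (fst ` compatible_pairs A B H \<phi>)
        \<and> H_separating B K (snd ` compatible_pairs A B H \<phi>)"
  (is "?filtrations \<longleftrightarrow> ?separating")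
proof
  assume ?filtrations
  then obtain \<Lambda> :: "('a set \<times> 'b set) set" and FA FB where
    "H_filtration A H \<Lambda> FA" "H_filtration B K \<Lambda> FB" and compatible: "compatible A B H K \<phi> \<Lambda> FA FB"
    by blast
  then have normal: "\<forall>l\<in>\<Lambda>. FA l \<lhd> A \<and> finite (rcosets\<^bsub>A\<^esub> (FA l)) \<and> FB l \<lhd> B \<and> finite (rcosets\<^bsub>B\<^esub> (FB l))"
    and "H_separating A H (FA ` \<Lambda>)" "H_separating B K (FB ` \<Lambda>)"
    by (simp_all add: H_filtration_iff_H_separating assms(1-4))
  moreover have "\<forall>l\<in>\<Lambda>. (FA l, FB l) \<in> compatible_pairs A B H \<phi>"
    using normal compatible compatible_iff_subgroups_correspond[OF assms, of \<Lambda> FA FB]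
    by (simp add: compatible_pairs_def)
  then have "FA ` \<Lambda> \<subseteq> fst ` compatible_pairs A B H \<phi>" "FB ` \<Lambda> \<subseteq> snd ` compatible_pairs A B H \<phi>"
    by force+
  ultimately show ?separating
    by (blast intro: H_separating_mono)
next
  assume ?separating
  then have "H_filtration A H (compatible_pairs A B H \<phi>) fst"
    and "H_filtration B K (compatible_pairs A B H \<phi>) snd"
    by (auto simp: H_filtration_iff_H_separating assms(1-4) compatible_pairs_def)
  moreover have "compatible A B H K \<phi> (compatible_pairs A B H \<phi>) fst snd"
    by (auto simp: compatible_iff_subgroups_correspond[OF assms] compatible_pairs_def)
  ultimately show ?filtrations
    by blast
qed

lemma carrier_pair_in_compatible_pairs:
  assumes "group A" "group B" "subgroup H A" "\<phi> ` H \<subseteq> carrier B"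
  shows "(carrier A, carrier B) \<in> compatible_pairs A B H \<phi>"
  using assms subgroup.mem_carrier
  by (auto simp: compatible_pairs_def group.normal_carrier group.finite_rcosets_carrier)

lemma compatible_pairs_inf_closed:
  assumes "group A" "group B" "p \<in> compatible_pairs A B H \<phi>" "q \<in> compatible_pairs A B H \<phi>"
  shows "inf p q \<in> compatible_pairs A B H \<phi>"
proof -
  obtain N M N' M' where "p = (N, M)" "q = (N', M')"
    by fastforce
  then show ?thesis
    using assms(3,4)
    by (auto simp: compatible_pairs_def intro!: assms(1,2) group.normal_subgroup_intersect
        group.finite_rcosets_Int normal_imp_subgroup)
qed

section \<open>Separating finitely many elements\<close>

definition separates :: "('a, 'c) monoid_scheme \<Rightarrow> 'a set \<Rightarrow> 'a list \<Rightarrow> 'a list \<Rightarrow> 'a set \<Rightarrow> bool"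
  where
  "separates G H xs hs N \<longleftrightarrow>
     (\<forall>x\<in>set xs. x \<notin> H <#>\<^bsub>G\<^esub> N) \<and> (\<forall>x\<in>set hs. \<forall>y\<in>set hs. x \<noteq> y \<longrightarrow> x \<otimes>\<^bsub>G\<^esub> inv\<^bsub>G\<^esub> y \<notin> N)"

lemma (in group_hom) separates_kernel_iff:
  assumes "subgroup S G" "set xs \<subseteq> carrier G" "set hs \<subseteq> carrier G"
  shows "separates G S xs hs (kernel G H h) \<longleftrightarrow>
    (\<forall>x\<in>set xs. h x \<notin> h ` S) \<and> (\<forall>x\<in>set hs. \<forall>y\<in>set hs. x \<noteq> y \<longrightarrow> h x \<noteq> h y)"
  using assms(2,3) by (auto simp: separates_def subset_iff hom_in_image_iff[OF assms(1)] hom_eq_iff_kernel)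

lemma (in normal) quotient_map_separates:
  assumes "finite (rcosets H)" "subgroup S G" "set xs \<subseteq> carrier G" "set hs \<subseteq> carrier G"
    and "separates G S xs hs H"
  shows "group (G Mod H)" "finite (carrier (G Mod H))"
    "(\<lambda>a. H #> a) \<in> hom G (G Mod H)" "(\<lambda>a. H #> a) ` carrier G = carrier (G Mod H)"
    "\<forall>x\<in>set xs. H #> x \<notin> (\<lambda>a. H #> a) ` S"
    "\<forall>x\<in>set hs. \<forall>y\<in>set hs. x \<noteq> y \<longrightarrow> H #> x \<noteq> H #> y"
proof -
  show "group (G Mod H)" "(\<lambda>a. H #> a) \<in> hom G (G Mod H)"
    by (simp_all add: factorgroup_is_group r_coset_hom_Mod)
  show "finite (carrier (G Mod H))"
    using assms(1) by (simp add: FactGroup_def)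
  show "(\<lambda>a. H #> a) ` carrier G = carrier (G Mod H)"
    by (simp add: carrier_FactGroup)
  show "\<forall>x\<in>set xs. H #> x \<notin> (\<lambda>a. H #> a) ` S"
    "\<forall>x\<in>set hs. \<forall>y\<in>set hs. x \<noteq> y \<longrightarrow> H #> x \<noteq> H #> y"
    using assms(5) group_hom.separates_kernel_iff[OF r_coset_group_hom_Mod assms(2-4)]
    by (simp_all add: kernel_r_coset_Mod)
qed

lemma finite_quotients_iff_compatible_pair:
  fixes A :: "('a, 'c) monoid_scheme" and B :: "('b, 'd) monoid_scheme"
  assumes "group A" "group B" "subgroup H A" "subgroup K B"
    and "\<phi> \<in> iso (A\<lparr>carrier := H\<rparr>) (B\<lparr>carrier := K\<rparr>)"
    and "set as \<subseteq> carrier A" "set hs \<subseteq> carrier A" "set bs \<subseteq> carrier B" "set ks \<subseteq> carrier B"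
  shows "(\<exists>(GA :: 'a set monoid) (GB :: 'b set monoid) fA fB.
           group GA \<and> group GB \<and> finite (carrier GA) \<and> finite (carrier GB)
           \<and> fA \<in> hom A GA \<and> fA ` carrier A = carrier GA
           \<and> fB \<in> hom B GB \<and> fB ` carrier B = carrier GB
           \<and> (\<exists>\<psi>. \<psi> \<in> iso (GA\<lparr>carrier := fA ` H\<rparr>) (GB\<lparr>carrier := fB ` K\<rparr>)
                 \<and> (\<forall>h\<in>H. \<psi> (fA h) = fB (\<phi> h)))
           \<and> (\<forall>a\<in>set as. fA a \<notin> fA ` H)
           \<and> (\<forall>b\<in>set bs. fB b \<notin> fB ` K)
           \<and> (\<forall>x\<in>set hs. \<forall>y\<in>set hs. x \<noteq> y \<longrightarrow> fA x \<noteq> fA y)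
           \<and> (\<forall>x\<in>set ks. \<forall>y\<in>set ks. x \<noteq> y \<longrightarrow> fB x \<noteq> fB y))
    \<longleftrightarrow> (\<exists>(N, M)\<in>compatible_pairs A B H \<phi>. separates A H as hs N \<and> separates B K bs ks M)"
  (is "?quotients \<longleftrightarrow> ?pair")
proof
  assume ?quotients
  then obtain GA :: "'a set monoid" and GB :: "'b set monoid" and fA fB \<psi> where
    "group GA" "group GB" and finite: "finite (carrier GA)" "finite (carrier GB)"
    and "fA \<in> hom A GA" and onto_A: "fA ` carrier A = carrier GA"
    and "fB \<in> hom B GB" and onto_B: "fB ` carrier B = carrier GB"
    and "\<psi> \<in> iso (GA\<lparr>carrier := fA ` H\<rparr>) (GB\<lparr>carrier := fB ` K\<rparr>)" "\<forall>h\<in>H. \<psi> (fA h) = fB (\<phi> h)"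
    and separation: "\<forall>a\<in>set as. fA a \<notin> fA ` H" "\<forall>b\<in>set bs. fB b \<notin> fB ` K"
      "\<forall>x\<in>set hs. \<forall>y\<in>set hs. x \<noteq> y \<longrightarrow> fA x \<noteq> fA y"
      "\<forall>x\<in>set ks. \<forall>y\<in>set ks. x \<noteq> y \<longrightarrow> fB x \<noteq> fB y"
    by auto
  then have fA: "group_hom A GA fA" and fB: "group_hom B GB fB"
    using assms(1,2) by (simp_all add: group_hom_def group_hom_axioms_def)
  have "(kernel A GA fA, kernel B GB fB) \<in> compatible_pairs A B H \<phi>"
    using group_hom.normal_kernel[OF fA] group_hom.normal_kernel[OF fB]
      group_hom.finite_rcosets_kernel[OF fA onto_A finite(1)]
      group_hom.finite_rcosets_kernel[OF fB onto_B finite(2)]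
      induced_iso_iff_kernels_correspond[OF fA fB assms(3-5)] \<open>\<psi> \<in> _\<close> \<open>\<forall>h\<in>H. _\<close>
    unfolding compatible_pairs_def by blast
  moreover have "separates A H as hs (kernel A GA fA)" "separates B K bs ks (kernel B GB fB)"
    using separation group_hom.separates_kernel_iff[OF fA assms(3,6,7)]
      group_hom.separates_kernel_iff[OF fB assms(4,8,9)] by simp_all
  ultimately show ?pair
    by blast
next
  assume ?pair
  then obtain N M where "(N, M) \<in> compatible_pairs A B H \<phi>"
    and separation: "separates A H as hs N" "separates B K bs ks M"
    by blast
  then have N: "N \<lhd> A" "finite (rcosets\<^bsub>A\<^esub> N)" and M: "M \<lhd> B" "finite (rcosets\<^bsub>B\<^esub> M)"
    and correspond: "\<forall>h\<in>H. h \<in> N \<longleftrightarrow> \<phi> h \<in> M"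
    by (simp_all add: compatible_pairs_def)
  have "\<exists>\<psi>. \<psi> \<in> iso ((A Mod N)\<lparr>carrier := (\<lambda>a. N #>\<^bsub>A\<^esub> a) ` H\<rparr>) ((B Mod M)\<lparr>carrier := (\<lambda>b. M #>\<^bsub>B\<^esub> b) ` K\<rparr>)
      \<and> (\<forall>h\<in>H. \<psi> (N #>\<^bsub>A\<^esub> h) = M #>\<^bsub>B\<^esub> \<phi> h)"
    using induced_iso_iff_kernels_correspond[OF normal.r_coset_group_hom_Mod[OF N(1)]
        normal.r_coset_group_hom_Mod[OF M(1)] assms(3-5)] correspond
    by (simp add: normal.kernel_r_coset_Mod[OF N(1)] normal.kernel_r_coset_Mod[OF M(1)])
  moreover note normal.quotient_map_separates[OF N assms(3,6,7) separation(1)]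
    normal.quotient_map_separates[OF M assms(4,8,9) separation(2)]
  ultimately show ?quotients
    by (intro exI[where x = "A Mod N"] exI[where x = "B Mod M"]
        exI[where x = "\<lambda>a. N #>\<^bsub>A\<^esub> a"] exI[where x = "\<lambda>b. M #>\<^bsub>B\<^esub> b"] conjI) simp_all
qed

lemma finite_requirements_common_witness:
  fixes P :: "'p::semilattice_inf set" and R :: "('p \<Rightarrow> bool) set"
  assumes "finite R" "P \<noteq> {}"
    and inf_closed: "\<And>p q. p \<in> P \<Longrightarrow> q \<in> P \<Longrightarrow> inf p q \<in> P"
    and "\<And>r p q. r \<in> R \<Longrightarrow> r p \<Longrightarrow> q \<le> p \<Longrightarrow> r q"
    and "\<And>r. r \<in> R \<Longrightarrow> \<exists>p\<in>P. r p"
  shows "\<exists>p\<in>P. \<forall>r\<in>R. r p"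
  using assms(1,4,5)
proof (induction R rule: finite_induct)
  case empty
  then show ?case
    using assms(2) by blast
next
  case (insert r R)
  have "\<exists>p\<in>P. \<forall>r'\<in>R. r' p"
  proof (rule insert.IH)
    show "r' q" if "r' \<in> R" "r' p" "q \<le> p" for r' p q
      using insert.prems(1)[of r' p q] that by simp
    show "\<exists>p\<in>P. r' p" if "r' \<in> R" for r'
      using insert.prems(2)[of r'] that by simp
  qed
  then obtain p where p: "p \<in> P" "\<forall>r'\<in>R. r' p"
    by blast
  obtain q where q: "q \<in> P" "r q"
    using insert.prems(2)[of r] by blast
  have "r' (inf p q)" if "r' \<in> insert r R" for r'
  proof (cases "r' = r")
    case True
    then show ?thesis
      using insert.prems(1)[of r q "inf p q"] q(2) by simp
  next
    case False
    then show ?thesis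
      using insert.prems(1)[of r' p "inf p q"] p(2) False that by auto
  qed
  then show ?case
    using inf_closed[OF p(1) q(1)] by blast
qed

lemma H_separating_witness:
  assumes "group G" "subgroup H G" "H_separating G H (f ` P)"
    and "set xs \<subseteq> carrier G - H" "set hs \<subseteq> H"
  shows "x \<in> set xs \<Longrightarrow> \<exists>p\<in>P. x \<notin> H <#>\<^bsub>G\<^esub> f p"
    and "x \<in> set hs \<Longrightarrow> y \<in> set hs \<Longrightarrow> x \<noteq> y \<Longrightarrow> \<exists>p\<in>P. x \<otimes>\<^bsub>G\<^esub> inv\<^bsub>G\<^esub> y \<notin> f p"
proof -
  interpret G: group G by fact
  show "\<exists>p\<in>P. x \<notin> H <#>\<^bsub>G\<^esub> f p" if "x \<in> set xs"
    using assms(3,4) that by (auto simp: H_separating_def)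
  show "\<exists>p\<in>P. x \<otimes>\<^bsub>G\<^esub> inv\<^bsub>G\<^esub> y \<notin> f p" if "x \<in> set hs" "y \<in> set hs" "x \<noteq> y"
  proof -
    have "x \<in> carrier G" "y \<in> carrier G"
      using that assms(5) subgroup.subset[OF assms(2)] by auto
    then have "x \<otimes>\<^bsub>G\<^esub> inv\<^bsub>G\<^esub> y \<in> carrier G - {\<one>\<^bsub>G\<^esub>}"
      using G.inv_solve_right'[of "\<one>\<^bsub>G\<^esub>" x y] that(3) by auto
    then show ?thesis
      using assms(3) by (auto simp: H_separating_def)
  qed
qed

lemma H_separating_if_separates_lists:
  assumes "group G" "subgroup H G"
    and "\<And>xs hs. set xs \<subseteq> carrier G - H \<Longrightarrow> set hs \<subseteq> H \<Longrightarrow> \<exists>N\<in>\<N>. separates G H xs hs N"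
  shows "H_separating G H \<N>"
  unfolding H_separating_def
proof (intro conjI ballI)
  fix x assume "x \<in> carrier G - H"
  then obtain N where "N \<in> \<N>" "separates G H [x] [] N"
    using assms(3)[of "[x]" "[]"] by auto
  then show "\<exists>N\<in>\<N>. x \<notin> H <#>\<^bsub>G\<^esub> N"
    by (auto simp: separates_def)
next
  interpret G: group G by fact
  fix x assume x: "x \<in> carrier G - {\<one>\<^bsub>G\<^esub>}"
  show "\<exists>N\<in>\<N>. x \<notin> N"
  proof (cases "x \<in> H")
    case True
    then obtain N where "N \<in> \<N>" "separates G H [] [x, \<one>\<^bsub>G\<^esub>] N"
      using assms(3)[of "[]" "[x, \<one>\<^bsub>G\<^esub>]"] subgroup.one_closed[OF assms(2)] by auto
    then show ?thesis
      using x by (auto simp: separates_def)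
  next
    case False
    then obtain N where "N \<in> \<N>" "x \<notin> H <#>\<^bsub>G\<^esub> N"
      using assms(3)[of "[x]" "[]"] x by (auto simp: separates_def)
    moreover have "x = \<one>\<^bsub>G\<^esub> \<otimes>\<^bsub>G\<^esub> x"
      using x by simp
    ultimately show ?thesis
      using subgroup.one_closed[OF assms(2)] unfolding set_mult_def by blast
  qed
qed

lemma separates_lists_if_H_separating:
  fixes A :: "('a, 'c) monoid_scheme" and B :: "('b, 'd) monoid_scheme"
  assumes "group A" "group B" "subgroup H A" "subgroup K B"
    and \<phi>: "\<phi> \<in> iso (A\<lparr>carrier := H\<rparr>) (B\<lparr>carrier := K\<rparr>)"
    and sep: "H_separating A H (fst ` compatible_pairs A B H \<phi>)"
      "H_separating B K (snd ` compatible_pairs A B H \<phi>)"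
    and lists: "set as \<subseteq> carrier A - H" "set bs \<subseteq> carrier B - K" "set hs \<subseteq> H" "set ks \<subseteq> K"
  shows "\<exists>(N, M)\<in>compatible_pairs A B H \<phi>. separates A H as hs N \<and> separates B K bs ks M"
proof -
  let ?P = "compatible_pairs A B H \<phi>"
  define R :: "('a set \<times> 'b set \<Rightarrow> bool) set" where
    "R = (\<lambda>a p. a \<notin> H <#>\<^bsub>A\<^esub> fst p) ` set as
       \<union> (\<lambda>b p. b \<notin> K <#>\<^bsub>B\<^esub> snd p) ` set bs
       \<union> (\<lambda>(x, y) p. x \<otimes>\<^bsub>A\<^esub> inv\<^bsub>A\<^esub> y \<notin> fst p) ` (SIGMA x:set hs. set hs - {x})
       \<union> (\<lambda>(x, y) p. x \<otimes>\<^bsub>B\<^esub> inv\<^bsub>B\<^esub> y \<notin> snd p) ` (SIGMA x:set ks. set ks - {x})"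
  have "\<exists>p\<in>?P. \<forall>r\<in>R. r p"
  proof (rule finite_requirements_common_witness)
    show "finite R"
      by (simp add: R_def)
    have "\<phi> ` H \<subseteq> carrier B"
      using \<phi> subgroup.subset[OF assms(4)] by (auto simp: iso_def bij_betw_def)
    then show "?P \<noteq> {}"
      using carrier_pair_in_compatible_pairs[OF assms(1-3)] by blast
    show "inf p q \<in> ?P" if "p \<in> ?P" "q \<in> ?P" for p q
      using compatible_pairs_inf_closed[OF assms(1,2) that] .
    show "r q" if "r \<in> R" "r p" "q \<le> p" for r p q
    proof -
      have "H <#>\<^bsub>A\<^esub> fst q \<subseteq> H <#>\<^bsub>A\<^esub> fst p" "K <#>\<^bsub>B\<^esub> snd q \<subseteq> K <#>\<^bsub>B\<^esub> snd p"
        using \<open>q \<le> p\<close> by (simp_all add: less_eq_prod_def mono_set_mult)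
      then show ?thesis
        using that(1,2) \<open>q \<le> p\<close> unfolding R_def less_eq_prod_def by auto
    qed
    show "\<exists>p\<in>?P. r p" if "r \<in> R" for r
      using that H_separating_witness[OF assms(1,3) sep(1) lists(1,3)]
        H_separating_witness[OF assms(2,4) sep(2) lists(2,4)]
      unfolding R_def by (auto; blast)
  qed
  then obtain N M where NM: "(N, M) \<in> ?P" "\<forall>r\<in>R. r (N, M)"
    by auto
  then have "separates A H as hs N \<and> separates B K bs ks M"
    by (simp add: R_def separates_def ball_Un split_paired_Ball_Sigma)
  then show ?thesis
    using NM(1) by blast
qed

lemma H_separating_iff_separates_lists:
  fixes A :: "('a, 'c) monoid_scheme" and B :: "('b, 'd) monoid_scheme"
  assumes "group A" "group B" "subgroup H A" "subgroup K B"
    and "\<phi> \<in> iso (A\<lparr>carrier := H\<rparr>) (B\<lparr>carrier := K\<rparr>)"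
  shows "H_separating A H (fst ` compatible_pairs A B H \<phi>)
          \<and> H_separating B K (snd ` compatible_pairs A B H \<phi>)
    \<longleftrightarrow> (\<forall>as bs hs ks.
          set as \<subseteq> carrier A - H \<and> set bs \<subseteq> carrier B - K \<and> set hs \<subseteq> H \<and> set ks \<subseteq> K \<longrightarrow>
          (\<exists>(N, M)\<in>compatible_pairs A B H \<phi>. separates A H as hs N \<and> separates B K bs ks M))"
  (is "?separating \<longleftrightarrow> ?lists")
proof
  assume ?separating
  then show ?lists
    using separates_lists_if_H_separating[OF assms] by simp
next
  let ?P = "compatible_pairs A B H \<phi>"
  assume lists: ?lists
  have "H_separating A H (fst ` ?P)"
  proof (rule H_separating_if_separates_lists[OF assms(1,3)])
    fix xs hs assume "set xs \<subseteq> carrier A - H" "set hs \<subseteq> H"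
    then obtain N M where "(N, M) \<in> ?P" "separates A H xs hs N"
      using lists[rule_format, of xs "[]" hs "[]"] by auto
    then show "\<exists>N\<in>fst ` ?P. separates A H xs hs N"
      by force
  qed
  moreover have "H_separating B K (snd ` ?P)"
  proof (rule H_separating_if_separates_lists[OF assms(2,4)])
    fix xs ks assume "set xs \<subseteq> carrier B - K" "set ks \<subseteq> K"
    then obtain N M where "(N, M) \<in> ?P" "separates B K xs ks M"
      using lists[rule_format, of "[]" xs "[]" ks] by auto
    then show "\<exists>M\<in>snd ` ?P. separates B K xs ks M"
      by force
  qed
  ultimately show ?separating ..
qed

theorem proposition3p2:
  fixes A :: "'a monoid" and B :: "'b monoid"
    and H :: "'a set" and K :: "'b set" and \<phi> :: "'a \<Rightarrow> 'b"
  assumes "group A" and "group B"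
    and "subgroup H A" and "subgroup K B"
    and "\<phi> \<in> iso (A\<lparr>carrier := H\<rparr>) (B\<lparr>carrier := K\<rparr>)"
  shows "(\<exists>(\<Lambda> :: ('a set \<times> 'b set) set) FA FB.
            H_filtration A H \<Lambda> FA \<and> H_filtration B K \<Lambda> FB
            \<and> compatible A B H K \<phi> \<Lambda> FA FB)
     \<longleftrightarrow>
     (\<forall>as bs hs ks.
        set as \<subseteq> carrier A - H \<and> set bs \<subseteq> carrier B - K
        \<and> set hs \<subseteq> H \<and> set ks \<subseteq> K \<longrightarrow>
        (\<exists>(GA :: 'a set monoid) (GB :: 'b set monoid) fA fB.
           group GA \<and> group GB \<and> finite (carrier GA) \<and> finite (carrier GB)
           \<and> fA \<in> hom A GA \<and> fA ` carrier A = carrier GA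
           \<and> fB \<in> hom B GB \<and> fB ` carrier B = carrier GB
           \<and> (\<exists>\<psi>. \<psi> \<in> iso (GA\<lparr>carrier := fA ` H\<rparr>) (GB\<lparr>carrier := fB ` K\<rparr>)
                 \<and> (\<forall>h\<in>H. \<psi> (fA h) = fB (\<phi> h)))
           \<and> (\<forall>a\<in>set as. fA a \<notin> fA ` H)
           \<and> (\<forall>b\<in>set bs. fB b \<notin> fB ` K)
           \<and> (\<forall>x\<in>set hs. \<forall>y\<in>set hs. x \<noteq> y \<longrightarrow> fA x \<noteq> fA y)
           \<and> (\<forall>x\<in>set ks. \<forall>y\<in>set ks. x \<noteq> y \<longrightarrow> fB x \<noteq> fB y)))"
proof -
  have carriers: "H \<subseteq> carrier A" "K \<subseteq> carrier B"
    using subgroup.subset assms(3,4) by auto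
  show ?thesis
    unfolding compatible_filtrations_iff_H_separating[OF assms]
      H_separating_iff_separates_lists[OF assms]
    by (intro all_cong1 imp_cong refl, rule finite_quotients_iff_compatible_pair[OF assms, symmetric])
      (use carriers in auto)
qed

end
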